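(* Let $n\in\mathbb N_0$, $a\in I$ and $L\in C^{[n]}(I^2)$. Define $\ell(s)=\int_a^sL(s,t)e^{i\kappa t}\,dt$, $r(s)=-e^{i\kappa a}\sigma_n[L(s,\cdot)](a)$ and $g(s)=[\ell(s)-r(s)]e^{-i\kappa s}$ for $s\in I$. Then for every $l\in\{0,1,\dots,n\}$ and $s\in I$, $$g^{(l)}(s)=-\sum_{(q,p)\in\mathbb U_{n,l}}C_l^p(-i\kappa)^{l-1-p-q}L^{(p,q)}(s,s)+\sum_{p=0}^lC_l^p(-i\kappa)^{l-p-n}\int_a^sL^{(p,n)}(s,t)e^{i\kappa(t-s)}\,dt.$$
   Context: $I=[-1,1]$, $\kappa>1$. $C^{[n]}(I^2)$ is the space of functions on $I^2$ whose partial derivatives $L^{(\alpha,\beta)}=\partial_s^\alpha\partial_t^\beta L$ with $\alpha,\beta\le n$ are continuous. For a function $u$ of one variable, $\sigma_n[u](t)=\sum_{j=0}^{n-1}\frac{(-1)^j}{(i\kappa)^{j+1}}u^{(j)}(t)$ (empty sum $=0$ if $n=0$). $C_l^p=\frac{l!}{p!(l-p)!}$. $\mathbb U_{n,l}=\{(q,p):q\in\{0,\dots,n-1\},\ p\in\{0,\dots,l\},\ q+p\ge l\}$. *)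

theory Defs
  imports "HOL-Analysis.Analysis"
begin

abbreviation I_ivl :: "real set" where "I_ivl \<equiv> {-1..1}"

definition oint :: "real \<Rightarrow> real \<Rightarrow> (real \<Rightarrow> complex) \<Rightarrow> complex" where
  "oint a b f = (if a \<le> b then integral {a..b} f else - integral {b..a} f)"

text \<open>L belongs to C^[n](I^2) and D alpha beta = L^(alpha,beta) = d_s^alpha d_t^beta L on I^2
  (alpha, beta \<le> n): first beta derivatives in t, then alpha derivatives in s; all of them
  continuous on I^2. Derivatives are taken within I (one-sided at the endpoints).\<close>
definition Cn_partials :: "nat \<Rightarrow> (real \<Rightarrow> real \<Rightarrow> complex) \<Rightarrow> (nat \<Rightarrow> nat \<Rightarrow> real \<Rightarrow> real \<Rightarrow> complex) \<Rightarrow> bool" where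
  "Cn_partials n L (D :: nat \<Rightarrow> nat \<Rightarrow> real \<Rightarrow> real \<Rightarrow> complex) \<longleftrightarrow>
     (\<forall>s\<in>I_ivl. \<forall>t\<in>I_ivl. D 0 0 s t = L s t) \<and>
     (\<forall>\<beta><n. \<forall>s\<in>I_ivl. \<forall>t\<in>I_ivl.
        ((\<lambda>t'. D 0 \<beta> s t') has_vector_derivative D 0 (Suc \<beta>) s t) (at t within I_ivl)) \<and>
     (\<forall>\<alpha><n. \<forall>\<beta>\<le>n. \<forall>s\<in>I_ivl. \<forall>t\<in>I_ivl.
        ((\<lambda>s'. D \<alpha> \<beta> s' t) has_vector_derivative D (Suc \<alpha>) \<beta> s t) (at s within I_ivl)) \<and>
     (\<forall>\<alpha>\<le>n. \<forall>\<beta>\<le>n. continuous_on (I_ivl \<times> I_ivl) (\<lambda>(s, t). D \<alpha> \<beta> s t))"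

text \<open>sigma_n[u](t), with the derivatives u^(j) supplied as du j.\<close>
definition sigma_op :: "real \<Rightarrow> nat \<Rightarrow> (nat \<Rightarrow> real \<Rightarrow> complex) \<Rightarrow> real \<Rightarrow> complex" where
  "sigma_op \<kappa> n du t = (\<Sum>j<n. (-1)^j / (\<i> * complex_of_real \<kappa>)^(j+1) * du j t)"

definition U_set :: "nat \<Rightarrow> nat \<Rightarrow> (nat \<times> nat) set" where
  "U_set n l = {(q, p). q < n \<and> p \<in> {0..l} \<and> q + p \<ge> l}"

end

theory Submission
  imports Defs
begin

text \<open>Integrating by parts n times in t gives
  ell(s) - r(s) = e^(i kappa s) sigma_n[L(s,.)](s) + (-1)^n (i kappa)^(-n) int_a^s L^(0,n)(s,t) e^(i kappa t) dt,
  which after multiplication by e^(-i kappa s) is the case l = 0. Differentiating in s, a diagonal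
  term L^(p,q)(s,s) yields L^(p+1,q)(s,s) + L^(p,q+1)(s,s), and an integral
  int_a^s L^(p,n)(s,t) e^(i kappa (t - s)) dt yields its boundary value L^(p,n)(s,s), the same
  integral of L^(p+1,n), and -i kappa times itself; Pascal's rule reassembles these terms into the
  formula for l + 1.\<close>

lemma has_vector_derivative_cexp_affine:
  fixes c d :: complex
  shows "((\<lambda>x::real. exp (c * of_real x + d)) has_vector_derivative c * exp (c * of_real x + d)) (at x within S)"
  by (rule has_vector_derivative_real_field[where f = "\<lambda>z. exp (c * z + d)"])
     (auto intro!: derivative_eq_intros)

lemma continuous_on_section:
  assumes "continuous_on (A \<times> B) (\<lambda>(x, t). f x t)" and "x \<in> A"
  shows "continuous_on B (f x)"
  using continuous_on_o_Pair[OF assms] by (simp add: o_def)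

lemma eq_add_integral_of_derivative:
  fixes F f :: "real \<Rightarrow> 'a::banach"
  assumes "y \<in> {lo..hi}"
    and "\<And>t. t \<in> {lo..hi} \<Longrightarrow> (F has_vector_derivative f t) (at t within {lo..hi})"
  shows "F y = F lo + integral {lo..y} f"
proof -
  have "(f has_integral (F y - F lo)) {lo..y}"
    using assms by (intro fundamental_theorem_of_calculus has_vector_derivative_within_subset[OF assms(2)]) auto
  then show ?thesis by (simp add: integral_unique)
qed

lemma oint_eq_diff:
  fixes F f :: "real \<Rightarrow> complex"
  assumes "a \<in> {lo..hi}" "s \<in> {lo..hi}"
    and "\<And>t. t \<in> {lo..hi} \<Longrightarrow> (F has_vector_derivative f t) (at t within {lo..hi})"
  shows "oint a s f = F s - F a"
proof -
  have "integral {x..y} f = F y - F x" if "x \<le> y" "x \<in> {lo..hi}" "y \<in> {lo..hi}" for x y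
    using that
    by (intro integral_unique fundamental_theorem_of_calculus has_vector_derivative_within_subset[OF assms(3)]) auto
  with assms show ?thesis by (cases "a \<le> s") (auto simp: oint_def)
qed

lemma oint_cong:
  assumes "a \<in> {lo..hi}" "s \<in> {lo..hi}" "\<And>t. t \<in> {lo..hi} \<Longrightarrow> f t = g t"
  shows "oint a s f = oint a s g"
  using assms unfolding oint_def by (auto intro!: integral_cong)

lemma oint_cmult: "oint a s (\<lambda>t. c * f t) = c * oint a s f"
  unfolding oint_def by (simp add: integral_mult_right)

lemma oint_add:
  assumes "a \<in> {lo..hi}" "s \<in> {lo..hi}" "continuous_on {lo..hi} f" "continuous_on {lo..hi} g"
  shows "oint a s (\<lambda>t. f t + g t) = oint a s f + oint a s g"
proof -
  have "f integrable_on {x..y}" "g integrable_on {x..y}" if "x \<in> {lo..hi}" "y \<in> {lo..hi}" for x y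
    using assms that by (auto intro!: integrable_continuous_interval elim!: continuous_on_subset)
  with assms show ?thesis unfolding oint_def by (auto simp: integral_add)
qed

lemma oint_eq_integral_diff:
  assumes "a \<in> {lo..hi}" "s \<in> {lo..hi}" "continuous_on {lo..hi} f"
  shows "oint a s f = integral {lo..s} f - integral {lo..a} f"
proof -
  have combine: "integral {lo..x} f + integral {x..y} f = integral {lo..y} f"
    if "x \<le> y" "x \<in> {lo..hi}" "y \<in> {lo..hi}" for x y
    using that assms
    by (intro Henstock_Kurzweil_Integration.integral_combine integrable_continuous_interval)
       (auto elim!: continuous_on_subset)
  show ?thesis
    using combine[of a s] combine[of s a] assms by (cases "a \<le> s") (auto simp: oint_def algebra_simps)
qed

lemma has_vector_derivative_integral_param:
  fixes f fx :: "real \<Rightarrow> real \<Rightarrow> 'a::banach"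
  assumes fx: "\<And>x t. x \<in> U \<Longrightarrow> t \<in> {lo..hi} \<Longrightarrow> ((\<lambda>x. f x t) has_vector_derivative fx x t) (at x within U)"
    and cf: "continuous_on (U \<times> {lo..hi}) (\<lambda>(x, t). f x t)"
    and cfx: "continuous_on (U \<times> {lo..hi}) (\<lambda>(x, t). fx x t)"
    and U: "convex U" "x \<in> U" and y: "y \<in> {lo..hi}"
  shows "((\<lambda>x. integral {lo..y} (f x)) has_vector_derivative integral {lo..y} (fx x)) (at x within U)"
proof -
  have "((\<lambda>x. integral (cbox lo y) (f x)) has_vector_derivative integral (cbox lo y) (fx x)) (at x within U)"
  proof (rule leibniz_rule_vector_derivative)
    show "((\<lambda>x. f x t) has_vector_derivative fx x t) (at x within U)" if "x \<in> U" "t \<in> cbox lo y" for x t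
      using that y by (intro fx) auto
    show "f x integrable_on cbox lo y" if "x \<in> U" for x
      using continuous_on_subset[OF continuous_on_section[OF cf that], of "{lo..y}"] y
      by (auto intro: integrable_continuous_interval)
    show "continuous_on (U \<times> cbox lo y) (\<lambda>(x, t). fx x t)"
      by (rule continuous_on_subset[OF cfx]) (use y in auto)
  qed (use U in auto)
  then show ?thesis by simp
qed

lemma has_vector_derivative_diagonal:
  fixes f fy :: "real \<Rightarrow> real \<Rightarrow> 'a::real_normed_vector"
  assumes fx: "((\<lambda>x. f x s) has_vector_derivative fx) (at s within S)"
    and fy: "\<And>x y. x \<in> S \<Longrightarrow> y \<in> S \<Longrightarrow> ((\<lambda>y. f x y) has_vector_derivative fy x y) (at y within S)"
    and cfy: "continuous_on (S \<times> S) (\<lambda>(x, y). fy x y)"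
    and S: "convex S" "s \<in> S"
  shows "((\<lambda>s. f s s) has_vector_derivative fx + fy s s) (at s within S)"
proof -
  have "((\<lambda>(x, y). f x y) has_derivative (\<lambda>(tx, ty). tx *\<^sub>R fx + blinfun_scaleR_left (fy s s) ty))
      (at (s, s) within S \<times> S)"
  proof (rule has_derivative_partialsI[where fx = "\<lambda>tx. tx *\<^sub>R fx" and fy = "\<lambda>x y. blinfun_scaleR_left (fy x y)"])
    show "((\<lambda>y. f x y) has_derivative blinfun_apply (blinfun_scaleR_left (fy x y))) (at y within S)"
      if "x \<in> S" "y \<in> S" for x y
      using fy[OF that] by (simp add: has_vector_derivative_def)
    have "continuous_on (S \<times> S) (\<lambda>(x, y). blinfun_scaleR_left (fy x y))"
      using cfy by (auto simp: split_beta intro!: continuous_intros)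
    then show "continuous (at (s, s) within S \<times> S) (\<lambda>(x, y). blinfun_scaleR_left (fy x y))"
      using S by (simp add: continuous_on_eq_continuous_within)
  qed (use fx S in \<open>auto simp: has_vector_derivative_def\<close>)
  then have "((\<lambda>(x, y). f x y) has_derivative (\<lambda>(tx, ty). tx *\<^sub>R fx + ty *\<^sub>R fy s s))
      (at (s, s) within (\<lambda>s. (s, s)) ` S)"
    by (auto intro: has_derivative_subset)
  moreover have "((\<lambda>s. (s, s)) has_derivative (\<lambda>h. (h, h))) (at s within S)"
    by (auto intro!: derivative_eq_intros)
  ultimately have "((\<lambda>s. f s s) has_derivative (\<lambda>h. h *\<^sub>R fx + h *\<^sub>R fy s s)) (at s within S)"
    using diff_chain_within by (fastforce simp: o_def)
  then have "((\<lambda>s. f s s) has_derivative (\<lambda>h. h *\<^sub>R (fx + fy s s))) (at s within S)"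
    by (simp add: scaleR_right_distrib)
  then show ?thesis by (simp add: has_vector_derivative_def)
qed

lemma has_vector_derivative_oint_param:
  fixes f fx :: "real \<Rightarrow> real \<Rightarrow> complex"
  assumes fx: "\<And>x t. x \<in> {lo..hi} \<Longrightarrow> t \<in> {lo..hi} \<Longrightarrow>
      ((\<lambda>x. f x t) has_vector_derivative fx x t) (at x within {lo..hi})"
    and cf: "continuous_on ({lo..hi} \<times> {lo..hi}) (\<lambda>(x, t). f x t)"
    and cfx: "continuous_on ({lo..hi} \<times> {lo..hi}) (\<lambda>(x, t). fx x t)"
    and a: "a \<in> {lo..hi}" and s: "s \<in> {lo..hi}"
  shows "((\<lambda>s. oint a s (f s)) has_vector_derivative f s s + oint a s (fx s)) (at s within {lo..hi})"
proof -
  define \<Phi> where "\<Phi> x y = integral {lo..y} (f x)" for x y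
  have \<Phi>_fst: "((\<lambda>x. \<Phi> x y) has_vector_derivative integral {lo..y} (fx s)) (at s within {lo..hi})"
    if "y \<in> {lo..hi}" for y
    unfolding \<Phi>_def by (rule has_vector_derivative_integral_param[OF fx cf cfx]) (use s that in auto)
  have \<Phi>_snd: "((\<lambda>y. \<Phi> x y) has_vector_derivative f x y) (at y within {lo..hi})"
    if "x \<in> {lo..hi}" "y \<in> {lo..hi}" for x y
    unfolding \<Phi>_def by (rule integral_has_vector_derivative[OF continuous_on_section[OF cf that(1)] that(2)])
  have "((\<lambda>s. \<Phi> s s - \<Phi> s a) has_vector_derivative
      integral {lo..s} (fx s) + f s s - integral {lo..a} (fx s)) (at s within {lo..hi})"
    by (intro has_vector_derivative_diff has_vector_derivative_diagonal[OF \<Phi>_fst \<Phi>_snd cf] \<Phi>_fst)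
       (use s a in \<open>auto simp: convex_real_interval\<close>)
  also have "integral {lo..s} (fx s) + f s s - integral {lo..a} (fx s) = f s s + oint a s (fx s)"
    using oint_eq_integral_diff[OF a s continuous_on_section[OF cfx s]] by simp
  finally show ?thesis
    by (rule has_vector_derivative_transform[OF s, rotated])
       (simp add: \<Phi>_def oint_eq_integral_diff[OF a _ continuous_on_section[OF cf]])
qed

text \<open>Differentiate f x t = f x lo + integral {lo..t} (ft x) in x under the integral sign.\<close>
lemma has_vector_derivative_mixed_partial:
  fixes f fx ft fxt :: "real \<Rightarrow> real \<Rightarrow> 'a::banach"
  assumes "lo < hi"
    and ft: "\<And>x t. x \<in> {lo..hi} \<Longrightarrow> t \<in> {lo..hi} \<Longrightarrow>
      ((\<lambda>t. f x t) has_vector_derivative ft x t) (at t within {lo..hi})"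
    and fx: "\<And>x t. x \<in> {lo..hi} \<Longrightarrow> t \<in> {lo..hi} \<Longrightarrow>
      ((\<lambda>x. f x t) has_vector_derivative fx x t) (at x within {lo..hi})"
    and fxt: "\<And>x t. x \<in> {lo..hi} \<Longrightarrow> t \<in> {lo..hi} \<Longrightarrow>
      ((\<lambda>x. ft x t) has_vector_derivative fxt x t) (at x within {lo..hi})"
    and cft: "continuous_on ({lo..hi} \<times> {lo..hi}) (\<lambda>(x, t). ft x t)"
    and cfxt: "continuous_on ({lo..hi} \<times> {lo..hi}) (\<lambda>(x, t). fxt x t)"
    and x: "x \<in> {lo..hi}" and t: "t \<in> {lo..hi}"
  shows "((\<lambda>t. fx x t) has_vector_derivative fxt x t) (at t within {lo..hi})"
proof -
  have lo: "lo \<in> {lo..hi}" using \<open>lo < hi\<close> by simp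
  have fx_repr: "fx x y = fx x lo + integral {lo..y} (fxt x)" if y: "y \<in> {lo..hi}" for y
  proof (rule vector_derivative_unique_within_closed_interval[OF \<open>lo < hi\<close>, unfolded cbox_interval])
    have f_repr: "f x' y = f x' lo + integral {lo..y} (ft x')" if "x' \<in> {lo..hi}" for x'
      by (rule eq_add_integral_of_derivative[OF y ft[OF that]])
    show "((\<lambda>x'. f x' lo + integral {lo..y} (ft x')) has_vector_derivative fx x y) (at x within {lo..hi})"
      by (rule has_vector_derivative_transform[OF x _ fx[OF x y]]) (simp add: f_repr)
    show "((\<lambda>x'. f x' lo + integral {lo..y} (ft x')) has_vector_derivative
        fx x lo + integral {lo..y} (fxt x)) (at x within {lo..hi})"
      by (intro has_vector_derivative_add fx[OF x lo]
          has_vector_derivative_integral_param[OF fxt cft cfxt _ x y]) (simp_all add: convex_real_interval)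
  qed (rule x)
  have fx_deriv: "((\<lambda>y. fx x lo + integral {lo..y} (fxt x)) has_vector_derivative fxt x t) (at t within {lo..hi})"
    using has_vector_derivative_add[OF has_vector_derivative_const
        integral_has_vector_derivative[OF continuous_on_section[OF cfxt x] t]] by simp
  show ?thesis
    by (rule has_vector_derivative_transform[OF t _ fx_deriv]) (erule fx_repr)
qed

lemma neg_one_power_divide_eq_power_int:
  fixes c :: "'a::field"
  shows "(-1) ^ m / c ^ m = (- c) powi (- int m)"
proof -
  have "(- c) powi (- int m) = inverse ((-1) ^ m * c ^ m)"
    by (simp only: power_int_minus power_int_of_nat power_minus[of c m])
  also have "\<dots> = inverse ((-1) ^ m) * inverse (c ^ m)"
    by (rule inverse_mult_distrib)
  also have "inverse ((-1 :: 'a) ^ m) = (-1) ^ m"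
    by (simp flip: power_inverse)
  finally show ?thesis by (simp add: divide_inverse)
qed

lemma sigma_op_Suc:
  "sigma_op \<kappa> (Suc m) du t = sigma_op \<kappa> m du t + (-1) ^ m / (\<i> * \<kappa>) ^ Suc m * du m t"
  by (simp add: sigma_op_def)

lemma sigma_op_eq_power_int:
  "sigma_op \<kappa> n du t = - (\<Sum>q<n. (- \<i> * \<kappa>) powi (- 1 - int q) * du q t)"
proof -
  have coeff: "(-1) ^ q / X ^ (q + 1) = - ((- X) powi (- 1 - int q))" for q and X :: complex
  proof -
    have "(-1) ^ q / X ^ (q + 1) = - ((-1) ^ Suc q / X ^ Suc q)" by simp
    also have "\<dots> = - ((- X) powi (- int (Suc q)))"
      by (simp only: neg_one_power_divide_eq_power_int)
    finally show ?thesis by simp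
  qed
  show ?thesis unfolding sigma_op_def coeff by (simp add: sum_negf)
qed

text \<open>U_weight (-i kappa) l q p is the coefficient of L^(p,q)(s,s) in g^(l)(s); for q < n it
  vanishes outside U_{n,l}.\<close>
definition U_weight :: "'a::field \<Rightarrow> nat \<Rightarrow> nat \<Rightarrow> nat \<Rightarrow> 'a" where
  "U_weight c l q p = (if l \<le> q + p then of_nat (l choose p) * c powi (int l - 1 - int p - int q) else 0)"

lemma sum_U_set:
  "(\<Sum>(q, p)\<in>U_set n l. of_nat (l choose p) * c powi (int l - 1 - int p - int q) * f q p)
    = (\<Sum>q<n. \<Sum>p\<le>l. U_weight c l q p * f q p)"
proof -
  have "U_set n l = Sigma {..<n} (\<lambda>q. {p \<in> {..l}. l \<le> q + p})"
    unfolding U_set_def by auto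
  then have "(\<Sum>(q, p)\<in>U_set n l. of_nat (l choose p) * c powi (int l - 1 - int p - int q) * f q p)
      = (\<Sum>q<n. \<Sum>p\<in>{p \<in> {..l}. l \<le> q + p}. of_nat (l choose p) * c powi (int l - 1 - int p - int q) * f q p)"
    by (simp add: sum.Sigma)
  also have "\<dots> = (\<Sum>q<n. \<Sum>p\<le>l.
      if l \<le> q + p then of_nat (l choose p) * c powi (int l - 1 - int p - int q) * f q p else 0)"
    by (intro sum.cong refl sum.inter_filter) simp
  also have "\<dots> = (\<Sum>q<n. \<Sum>p\<le>l. U_weight c l q p * f q p)"
    by (intro sum.cong refl) (simp add: U_weight_def)
  finally show ?thesis .
qed

lemma U_weight_Suc:
  "U_weight c (Suc l) q p
    = (if p = 0 then 0 else U_weight c l q (p - 1)) + (if q = 0 then 0 else U_weight c l (q - 1) p)"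
proof (cases p)
  case 0
  then show ?thesis by (cases q) (auto simp: U_weight_def algebra_simps)
next
  case (Suc p')
  show ?thesis
  proof (cases q)
    case 0
    then show ?thesis using Suc by (auto simp: U_weight_def algebra_simps binomial_eq_0)
  next
    case (Suc q')
    then show ?thesis using \<open>p = Suc p'\<close> by (auto simp: U_weight_def algebra_simps)
  qed
qed

lemma sum_U_weight_Suc:
  fixes c :: "'a::field" and d :: "nat \<Rightarrow> nat \<Rightarrow> 'a"
  assumes "k < n"
  shows "(\<Sum>q<n. \<Sum>p\<le>Suc k. U_weight c (Suc k) q p * d p q)
    = (\<Sum>q<n. \<Sum>p\<le>k. U_weight c k q p * (d (Suc p) q + d p (Suc q)))
      - (\<Sum>p\<le>k. of_nat (k choose p) * c powi (int k - int p - int n) * d p n)"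
proof -
  obtain m where n: "n = Suc m" using assms by (cases n) auto
  have shift_p: "(\<Sum>p\<le>Suc k. (if p = 0 then 0 else U_weight c k q (p - 1)) * d p q)
      = (\<Sum>p\<le>k. U_weight c k q p * d (Suc p) q)" for q
    by (simp only: sum.atMost_Suc_shift) simp
  have shift_q: "(\<Sum>q<n. \<Sum>p\<le>Suc k. (if q = 0 then 0 else U_weight c k (q - 1) p) * d p q)
      = (\<Sum>q<m. \<Sum>p\<le>k. U_weight c k q p * d p (Suc q))"
    unfolding n by (simp only: sum.lessThan_Suc_shift) (simp add: U_weight_def binomial_eq_0)
  have last_row: "U_weight c k m p = of_nat (k choose p) * c powi (int k - int p - int n)" for p
    using assms unfolding n U_weight_def by (auto simp: algebra_simps)
  have "(\<Sum>q<n. \<Sum>p\<le>Suc k. U_weight c (Suc k) q p * d p q)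
      = (\<Sum>q<n. \<Sum>p\<le>Suc k. (if p = 0 then 0 else U_weight c k q (p - 1)) * d p q)
        + (\<Sum>q<n. \<Sum>p\<le>Suc k. (if q = 0 then 0 else U_weight c k (q - 1) p) * d p q)"
    by (simp only: U_weight_Suc distrib_right sum.distrib)
  also have "\<dots> = (\<Sum>q<n. \<Sum>p\<le>k. U_weight c k q p * d (Suc p) q)
      + (\<Sum>q<m. \<Sum>p\<le>k. U_weight c k q p * d p (Suc q))"
    by (simp only: shift_p shift_q)
  also have "(\<Sum>q<m. \<Sum>p\<le>k. U_weight c k q p * d p (Suc q))
      = (\<Sum>q<n. \<Sum>p\<le>k. U_weight c k q p * d p (Suc q))
        - (\<Sum>p\<le>k. of_nat (k choose p) * c powi (int k - int p - int n) * d p n)"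
    unfolding n by (simp add: last_row[unfolded n])
  finally show ?thesis by (simp add: distrib_left sum.distrib)
qed

lemma binomial_power_int_sum_Suc:
  fixes c :: "'a::field" and h :: "nat \<Rightarrow> 'a"
  assumes "c \<noteq> 0"
  shows "(\<Sum>p\<le>k. of_nat (k choose p) * c powi (int k - int p - int n) * (h (Suc p) + c * h p))
    = (\<Sum>p\<le>Suc k. of_nat (Suc k choose p) * c powi (int (Suc k) - int p - int n) * h p)"
proof -
  have c_power: "c * c powi (int k - int p - int n) = c powi (int (Suc k) - int p - int n)" for p
    using power_int_add_1'[of c "int k - int p - int n"] assms by (simp add: algebra_simps)
  have "(\<Sum>p\<le>Suc k. of_nat (Suc k choose p) * c powi (int (Suc k) - int p - int n) * h p)
      = c powi (int (Suc k) - int n) * h 0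
        + (\<Sum>p\<le>k. of_nat (k choose p) * c powi (int k - int p - int n) * h (Suc p))
        + (\<Sum>p\<le>k. of_nat (k choose Suc p) * c powi (int k - int p - int n) * h (Suc p))"
    by (simp only: sum.atMost_Suc_shift binomial_Suc_Suc of_nat_add) (simp add: sum.distrib algebra_simps)
  moreover have "(\<Sum>p\<le>k. of_nat (k choose p) * c powi (int k - int p - int n) * (c * h p))
      = c powi (int (Suc k) - int n) * h 0
        + (\<Sum>p\<le>k. of_nat (k choose Suc p) * c powi (int k - int p - int n) * h (Suc p))"
  proof -
    have "(\<Sum>p\<le>k. of_nat (k choose p) * c powi (int k - int p - int n) * (c * h p))
        = (\<Sum>p\<le>k. of_nat (k choose p) * c powi (int (Suc k) - int p - int n) * h p)"
      by (intro sum.cong refl) (simp only: c_power[symmetric] mult_ac)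
    also have "\<dots> = (\<Sum>p\<le>Suc k. of_nat (k choose p) * c powi (int (Suc k) - int p - int n) * h p)"
      by (simp add: binomial_eq_0)
    also have "\<dots> = c powi (int (Suc k) - int n) * h 0
        + (\<Sum>p\<le>k. of_nat (k choose Suc p) * c powi (int k - int p - int n) * h (Suc p))"
      by (simp only: sum.atMost_Suc_shift) simp
    finally show ?thesis .
  qed
  ultimately show ?thesis by (simp add: distrib_left sum.distrib algebra_simps)
qed

locale Cn_kernel =
  fixes n :: nat and L :: "real \<Rightarrow> real \<Rightarrow> complex" and D :: "nat \<Rightarrow> nat \<Rightarrow> real \<Rightarrow> real \<Rightarrow> complex"
  assumes Cn_partials: "Cn_partials n L D"
begin

lemma D_0_0: "s \<in> I_ivl \<Longrightarrow> t \<in> I_ivl \<Longrightarrow> D 0 0 s t = L s t"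
  using Cn_partials by (simp add: Cn_partials_def)

lemma has_vector_derivative_D_0_snd:
  "q < n \<Longrightarrow> s \<in> I_ivl \<Longrightarrow> t \<in> I_ivl \<Longrightarrow>
    ((\<lambda>t. D 0 q s t) has_vector_derivative D 0 (Suc q) s t) (at t within I_ivl)"
  using Cn_partials by (simp add: Cn_partials_def)

lemma has_vector_derivative_D_fst:
  "p < n \<Longrightarrow> q \<le> n \<Longrightarrow> s \<in> I_ivl \<Longrightarrow> t \<in> I_ivl \<Longrightarrow>
    ((\<lambda>s. D p q s t) has_vector_derivative D (Suc p) q s t) (at s within I_ivl)"
  using Cn_partials by (simp add: Cn_partials_def)

lemma continuous_on_D: "p \<le> n \<Longrightarrow> q \<le> n \<Longrightarrow> continuous_on (I_ivl \<times> I_ivl) (\<lambda>(s, t). D p q s t)"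
  using Cn_partials by (simp add: Cn_partials_def)

text \<open>Cn_partials prescribes t-derivatives only of D 0 q; those of D p q are obtained by
  induction on p.\<close>
lemma has_vector_derivative_D_snd:
  assumes "p \<le> n" "q < n" "s \<in> I_ivl" "t \<in> I_ivl"
  shows "((\<lambda>t. D p q s t) has_vector_derivative D p (Suc q) s t) (at t within I_ivl)"
  using assms
proof (induction p arbitrary: s t)
  case 0
  then show ?case by (simp add: has_vector_derivative_D_0_snd)
next
  case (Suc p)
  show ?case
    by (rule has_vector_derivative_mixed_partial[where f = "D p q" and ft = "D p (Suc q)"
          and fx = "D (Suc p) q" and fxt = "D (Suc p) (Suc q)"])
       (use Suc in \<open>auto intro: has_vector_derivative_D_fst continuous_on_D\<close>)
qed

lemma has_vector_derivative_D_diagonal: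
  "p < n \<Longrightarrow> q < n \<Longrightarrow> s \<in> I_ivl \<Longrightarrow>
    ((\<lambda>s. D p q s s) has_vector_derivative D (Suc p) q s s + D p (Suc q) s s) (at s within I_ivl)"
  by (rule has_vector_derivative_diagonal[OF has_vector_derivative_D_fst has_vector_derivative_D_snd
        continuous_on_D]) (auto simp: convex_real_interval)

end

locale oscillatory_kernel = Cn_kernel +
  fixes \<kappa> a :: real
  assumes \<kappa>_nonzero: "\<kappa> \<noteq> 0" and a: "a \<in> I_ivl"
begin

definition osc_integral :: "nat \<Rightarrow> real \<Rightarrow> complex" where
  "osc_integral p s = oint a s (\<lambda>t. D p n s t * exp (\<i> * \<kappa> * (t - s)))"

definition deriv_formula :: "nat \<Rightarrow> real \<Rightarrow> complex" where
  "deriv_formula l s =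
    - (\<Sum>(q, p)\<in>U_set n l. of_nat (l choose p) * (- \<i> * \<kappa>) powi (int l - 1 - int p - int q) * D p q s s)
    + (\<Sum>p\<le>l. of_nat (l choose p) * (- \<i> * \<kappa>) powi (int l - int p - int n) * osc_integral p s)"

lemma continuous_on_D_exp:
  "p \<le> n \<Longrightarrow> q \<le> n \<Longrightarrow>
    continuous_on (I_ivl \<times> I_ivl) (\<lambda>(s, t). D p q s t * exp (\<i> * \<kappa> * (t - s)))"
  using continuous_on_D[of p q] unfolding split_beta by (intro continuous_intros) auto

lemma has_vector_derivative_osc_integral:
  assumes p: "p < n" and s: "s \<in> I_ivl"
  shows "(osc_integral p has_vector_derivative
      D p n s s + (osc_integral (Suc p) s + (- \<i> * \<kappa>) * osc_integral p s)) (at s within I_ivl)"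
proof -
  define f where "f x t = D p n x t * exp (\<i> * \<kappa> * (t - x))" for x t
  define fx where "fx x t = D (Suc p) n x t * exp (\<i> * \<kappa> * (t - x)) + (- \<i> * \<kappa>) * f x t" for x t
  have f_deriv: "((\<lambda>x. f x t) has_vector_derivative fx x t) (at x within I_ivl)"
    if "x \<in> I_ivl" "t \<in> I_ivl" for x t
  proof -
    have "((\<lambda>x. D p n x t * exp (- \<i> * \<kappa> * x + \<i> * \<kappa> * t)) has_vector_derivative
        D p n x t * (- \<i> * \<kappa> * exp (- \<i> * \<kappa> * x + \<i> * \<kappa> * t))
        + D (Suc p) n x t * exp (- \<i> * \<kappa> * x + \<i> * \<kappa> * t)) (at x within I_ivl)"
      by (rule has_vector_derivative_mult[OF has_vector_derivative_D_fst[OF p _ that]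
          has_vector_derivative_cexp_affine]) simp
    moreover have "exp (- \<i> * \<kappa> * x + \<i> * \<kappa> * t) = exp (\<i> * \<kappa> * (t - x))" for x
      by (simp add: algebra_simps)
    ultimately show ?thesis
      unfolding f_def fx_def by (simp add: algebra_simps)
  qed
  have cf: "continuous_on (I_ivl \<times> I_ivl) (\<lambda>(x, t). f x t)"
    using continuous_on_D_exp[of p n] p unfolding f_def by simp
  have cD: "continuous_on (I_ivl \<times> I_ivl) (\<lambda>(x, t). D (Suc p) n x t * exp (\<i> * \<kappa> * (t - x)))"
    using continuous_on_D_exp[of "Suc p" n] p by simp
  have cfx: "continuous_on (I_ivl \<times> I_ivl) (\<lambda>(x, t). fx x t)"
    unfolding fx_def split_beta
    by (intro continuous_on_add continuous_on_mult_left cD[unfolded split_beta] cf[unfolded split_beta])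
  have osc: "osc_integral p = (\<lambda>s. oint a s (f s))"
    by (simp add: fun_eq_iff osc_integral_def f_def[abs_def])
  have fx_oint: "oint a s (fx s) = osc_integral (Suc p) s + (- \<i> * \<kappa>) * osc_integral p s"
  proof -
    have "oint a s (fx s) = oint a s (\<lambda>t. D (Suc p) n s t * exp (\<i> * \<kappa> * (t - s)))
        + oint a s (\<lambda>t. (- \<i> * \<kappa>) * f s t)"
      unfolding fx_def
      by (rule oint_add[OF a s continuous_on_section[OF cD s]
            continuous_on_mult_left[OF continuous_on_section[OF cf s]]])
    then show ?thesis unfolding oint_cmult by (simp add: osc_integral_def f_def)
  qed
  have f_diag: "f s s = D p n s s" by (simp add: f_def)
  show ?thesis
    using has_vector_derivative_oint_param[OF f_deriv cf cfx a s] unfolding osc fx_oint f_diag .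
qed

lemma continuous_on_D_0_exp:
  "q \<le> n \<Longrightarrow> s \<in> I_ivl \<Longrightarrow> continuous_on I_ivl (\<lambda>t. D 0 q s t * exp (\<i> * \<kappa> * t))"
  by (intro continuous_intros continuous_on_section[OF continuous_on_D]) auto

lemma oint_D_exp_by_parts:
  assumes m: "m < n" and s: "s \<in> I_ivl"
  shows "oint a s (\<lambda>t. D 0 m s t * exp (\<i> * \<kappa> * t))
    = (D 0 m s s * exp (\<i> * \<kappa> * s) - D 0 m s a * exp (\<i> * \<kappa> * a)) / (\<i> * \<kappa>)
      - oint a s (\<lambda>t. D 0 (Suc m) s t * exp (\<i> * \<kappa> * t)) / (\<i> * \<kappa>)"
proof -
  define F where "F t = D 0 m s t * exp (\<i> * \<kappa> * t)" for t
  define G where "G t = D 0 (Suc m) s t * exp (\<i> * \<kappa> * t)" for t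
  have c: "\<i> * complex_of_real \<kappa> \<noteq> 0" using \<kappa>_nonzero by simp
  have "(F has_vector_derivative (\<i> * \<kappa>) * F t + G t) (at t within I_ivl)" if "t \<in> I_ivl" for t
  proof -
    have "(F has_vector_derivative D 0 m s t * (\<i> * \<kappa> * exp (\<i> * \<kappa> * t))
        + D 0 (Suc m) s t * exp (\<i> * \<kappa> * t)) (at t within I_ivl)"
      using has_vector_derivative_mult[OF has_vector_derivative_D_0_snd[OF m s that]
          has_vector_derivative_cexp_affine[of "\<i> * \<kappa>" 0]]
      by (simp add: F_def[abs_def])
    then show ?thesis
      by (rule has_vector_derivative_eq_rhs) (simp add: F_def G_def algebra_simps)
  qed
  then have "oint a s (\<lambda>t. (\<i> * \<kappa>) * F t + G t) = F s - F a"
    by (rule oint_eq_diff[OF a s])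
  moreover have "oint a s (\<lambda>t. (\<i> * \<kappa>) * F t + G t) = (\<i> * \<kappa>) * oint a s F + oint a s G"
    using continuous_on_D_0_exp[of m s] continuous_on_D_0_exp[of "Suc m" s] m s
    by (simp add: F_def[abs_def] G_def[abs_def] oint_add[OF a s] continuous_on_mult_left oint_cmult)
  ultimately have "(\<i> * \<kappa>) * oint a s F = F s - F a - oint a s G"
    by (simp add: eq_diff_eq)
  then have "oint a s F = (F s - F a - oint a s G) / (\<i> * \<kappa>)"
    using c by (simp add: eq_divide_eq mult.commute)
  then show ?thesis by (simp only: diff_divide_distrib F_def[abs_def] G_def[abs_def])
qed

lemma oint_exp_by_parts_sigma_op:
  assumes "m \<le> n" and s: "s \<in> I_ivl"
  shows "oint a s (\<lambda>t. L s t * exp (\<i> * \<kappa> * t))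
    = exp (\<i> * \<kappa> * s) * sigma_op \<kappa> m (\<lambda>j t. D 0 j s t) s
      - exp (\<i> * \<kappa> * a) * sigma_op \<kappa> m (\<lambda>j t. D 0 j s t) a
      + (-1) ^ m / (\<i> * \<kappa>) ^ m * oint a s (\<lambda>t. D 0 m s t * exp (\<i> * \<kappa> * t))"
  using assms(1)
proof (induction m)
  case 0
  have "oint a s (\<lambda>t. L s t * exp (\<i> * \<kappa> * t)) = oint a s (\<lambda>t. D 0 0 s t * exp (\<i> * \<kappa> * t))"
    by (rule oint_cong[OF a s]) (use s in \<open>auto simp: D_0_0\<close>)
  then show ?case by (simp add: sigma_op_def)
next
  case (Suc m)
  have c: "\<i> * complex_of_real \<kappa> \<noteq> 0" using \<kappa>_nonzero by simp
  show ?case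
    unfolding Suc.IH[OF Suc_leD[OF Suc.prems]] oint_D_exp_by_parts[OF Suc_le_lessD[OF Suc.prems] s]
      sigma_op_Suc
    using c by (simp add: field_simps)
qed

lemma deriv_formula_eq:
  "deriv_formula l s = - (\<Sum>q<n. \<Sum>p\<le>l. U_weight (- \<i> * \<kappa>) l q p * D p q s s)
    + (\<Sum>p\<le>l. of_nat (l choose p) * (- \<i> * \<kappa>) powi (int l - int p - int n) * osc_integral p s)"
  by (simp add: deriv_formula_def sum_U_set)

lemma has_vector_derivative_deriv_formula:
  assumes k: "k < n" and s: "s \<in> I_ivl"
  shows "(deriv_formula k has_vector_derivative deriv_formula (Suc k) s) (at s within I_ivl)"
proof -
  define c where "c = - \<i> * complex_of_real \<kappa>"
  have c: "c \<noteq> 0" using \<kappa>_nonzero by (simp add: c_def)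
  have "((\<lambda>s. \<Sum>q<n. \<Sum>p\<le>k. U_weight c k q p * D p q s s) has_vector_derivative
      (\<Sum>q<n. \<Sum>p\<le>k. U_weight c k q p * (D (Suc p) q s s + D p (Suc q) s s))) (at s within I_ivl)"
    using k s
    by (intro has_vector_derivative_sum has_vector_derivative_mult_right has_vector_derivative_D_diagonal) auto
  moreover have "((\<lambda>s. \<Sum>p\<le>k. of_nat (k choose p) * c powi (int k - int p - int n) * osc_integral p s)
      has_vector_derivative (\<Sum>p\<le>k. of_nat (k choose p) * c powi (int k - int p - int n)
        * (D p n s s + (osc_integral (Suc p) s + c * osc_integral p s)))) (at s within I_ivl)"
    using k s unfolding c_def
    by (intro has_vector_derivative_sum has_vector_derivative_mult_right has_vector_derivative_osc_integral) auto
  ultimately have "(deriv_formula k has_vector_derivative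
      - (\<Sum>q<n. \<Sum>p\<le>k. U_weight c k q p * (D (Suc p) q s s + D p (Suc q) s s))
      + (\<Sum>p\<le>k. of_nat (k choose p) * c powi (int k - int p - int n)
        * (D p n s s + (osc_integral (Suc p) s + c * osc_integral p s)))) (at s within I_ivl)"
    unfolding deriv_formula_eq[abs_def] c_def[symmetric]
    by (intro has_vector_derivative_add has_vector_derivative_minus)
  also have "- (\<Sum>q<n. \<Sum>p\<le>k. U_weight c k q p * (D (Suc p) q s s + D p (Suc q) s s))
      + (\<Sum>p\<le>k. of_nat (k choose p) * c powi (int k - int p - int n)
        * (D p n s s + (osc_integral (Suc p) s + c * osc_integral p s)))
    = deriv_formula (Suc k) s"
    unfolding deriv_formula_eq c_def[symmetric] sum_U_weight_Suc[OF k]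
      binomial_power_int_sum_Suc[OF c, symmetric]
    by (simp add: distrib_left sum.distrib)
  finally show ?thesis .
qed

lemma deriv_formula_0:
  assumes s: "s \<in> I_ivl"
  shows "deriv_formula 0 s = (oint a s (\<lambda>t. L s t * exp (\<i> * \<kappa> * t))
      + exp (\<i> * \<kappa> * a) * sigma_op \<kappa> n (\<lambda>j t. D 0 j s t) a) * exp (- \<i> * \<kappa> * s)"
proof -
  have "oint a s (\<lambda>t. D 0 n s t * exp (\<i> * \<kappa> * t)) * exp (- \<i> * \<kappa> * s) = osc_integral 0 s"
    unfolding osc_integral_def mult.commute[of _ "exp (- \<i> * \<kappa> * s)"] oint_cmult[symmetric]
    by (rule oint_cong[OF a s]) (simp add: exp_add[symmetric] algebra_simps)
  moreover have "(-1) ^ n / (\<i> * complex_of_real \<kappa>) ^ n = (- \<i> * \<kappa>) powi (- int n)"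
    using neg_one_power_divide_eq_power_int[of n "\<i> * complex_of_real \<kappa>"] by simp
  moreover have "exp (\<i> * \<kappa> * s) * exp (- \<i> * \<kappa> * s) = 1"
    by (simp add: exp_add[symmetric])
  ultimately show ?thesis
    unfolding oint_exp_by_parts_sigma_op[OF order_refl s] deriv_formula_eq
    by (simp add: U_weight_def sigma_op_eq_power_int algebra_simps)
qed

end

theorem lemma4p2:
  fixes n :: nat and a \<kappa> :: real
    and L :: "real \<Rightarrow> real \<Rightarrow> complex"
    and D :: "nat \<Rightarrow> nat \<Rightarrow> real \<Rightarrow> real \<Rightarrow> complex"
    and ell r g :: "real \<Rightarrow> complex"
  assumes \<kappa>: "\<kappa> > 1"
    and a: "a \<in> I_ivl"
    and L: "Cn_partials n L D"
    and ell_def: "\<And>s. ell s = oint a s (\<lambda>t. L s t * exp (\<i> * \<kappa> * t))"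
    and r_def: "\<And>s. r s = - exp (\<i> * \<kappa> * a) * sigma_op \<kappa> n (\<lambda>j t. D 0 j s t) a"
    and g_def: "\<And>s. g s = (ell s - r s) * exp (- \<i> * \<kappa> * s)"
  shows "\<exists>G :: nat \<Rightarrow> real \<Rightarrow> complex.
     (\<forall>s\<in>I_ivl. G 0 s = g s) \<and>
     (\<forall>k<n. \<forall>s\<in>I_ivl. (G k has_vector_derivative G (Suc k) s) (at s within I_ivl)) \<and>
     (\<forall>l\<le>n. \<forall>s\<in>I_ivl.
        G l s =
          - (\<Sum>(q, p)\<in>U_set n l. of_nat (l choose p) * (- \<i> * \<kappa>) powi (int l - 1 - int p - int q) * D p q s s)
          + (\<Sum>p\<le>l. of_nat (l choose p) * (- \<i> * \<kappa>) powi (int l - int p - int n) *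
               oint a s (\<lambda>t. D p n s t * exp (\<i> * \<kappa> * (t - s)))))"
proof -
  interpret oscillatory_kernel n L D \<kappa> a
    by unfold_locales (use L \<kappa> a in auto)
  show ?thesis
  proof (intro exI[of _ deriv_formula] conjI ballI allI impI)
    fix s assume "s \<in> I_ivl"
    then show "deriv_formula 0 s = g s"
      by (simp add: deriv_formula_0 g_def ell_def r_def)
  next
    fix k s assume "k < n" "s \<in> I_ivl"
    then show "(deriv_formula k has_vector_derivative deriv_formula (Suc k) s) (at s within I_ivl)"
      by (rule has_vector_derivative_deriv_formula)
  next
    fix l s
    show "deriv_formula l s =
        - (\<Sum>(q, p)\<in>U_set n l. of_nat (l choose p) * (- \<i> * \<kappa>) powi (int l - 1 - int p - int q) * D p q s s)
        + (\<Sum>p\<le>l. of_nat (l choose p) * (- \<i> * \<kappa>) powi (int l - int p - int n) *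
             oint a s (\<lambda>t. D p n s t * exp (\<i> * \<kappa> * (t - s))))"
      by (simp add: deriv_formula_def osc_integral_def)
  qed
qed

end
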